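(* For $n\ge 1$ let $\tau$ be a plane increasing binary tree of size $n$ chosen uniformly at random, and let $X_n$ be the number of distinct shapes (unlabeled plane binary trees) among the fringe subtrees of $\tau$, i.e. the size of the compacted tree of $\tau$. Then \[ \mathbb{E}(X_n) = \mathcal{O}\!\left(\frac{n}{\log n}\right) \quad \text{as } n\to\infty . \]
   Context: A plane binary tree is a rooted tree in which every node has a left and a right slot, each of which is either empty or holds a subtree (left and right are distinguished); its size is its number of nodes. A plane increasing binary tree of size $n$ is a plane binary tree with $n$ nodes labeled by the distinct integers $1,\dots,n$ such that labels increase along every path from the root; there are $n!$ of them (this is the random binary search tree model). The shape of such a tree is the unlabeled plane binary tree obtained by forgetting the labels. A fringe subtree is a node together with all its descendants. The compacted tree keeps one copy of each distinct fringe-subtree shape. *)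

theory Defs
  imports "HOL-Library.Tree" "HOL-Library.Landau_Symbols" "HOL-Probability.Probability_Mass_Function"
begin

definition shape :: "'a tree \<Rightarrow> unit tree" where
  "shape t = map_tree (\<lambda>_. ()) t"

definition inc_trees :: "nat \<Rightarrow> nat tree set" where
  "inc_trees n = {t. size t = n \<and> set_tree t = {1..n} \<and> heap t}"

text \<open>Size of the compacted tree: number of distinct shapes of fringe subtrees
  (nonempty subtrees, i.e. a node with all its descendants).\<close>
definition compacted_size :: "'a tree \<Rightarrow> nat" where
  "compacted_size t = card (shape ` (subtrees t - {Leaf}))"

definition expected_compacted_size :: "nat \<Rightarrow> real" where
  "expected_compacted_size n =
     measure_pmf.expectation (pmf_of_set (inc_trees n)) (\<lambda>t. real (compacted_size t))"

end

theory Submission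
  imports Defs "HOL-Real_Asymp.Real_Asymp"
begin

(* Fix a threshold k. Fringe subtrees with at most k nodes have at most 2^(2k+1) distinct shapes
   (their preorder bit codes are prefix-free words of length at most 2k+1, so padding them to
   length 2k+1 keeps them distinct), and each remaining distinct shape is contributed by a node
   whose fringe subtree has more than k nodes. Hence
   X_n <= 2^(2k+1) + #{nodes whose fringe subtree has more than k nodes}.
   The second term is an additive functional. The root of an increasing tree carries the minimal
   label, and each subset L of the other n - 1 labels is the left label set of exactly
   |L|! (n-1-|L|)! trees, so the size of the left subtree is uniform on {0..n-1}. This gives the
   recurrence n a_n = n [k < n] + 2 (a_0 + ... + a_(n-1)) for the mean a_n, solved by
   a_n = 2(n+1)/(k+2) - 1 for n > k. Taking k = floor(log_16 n) makes the first term O(sqrt n)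
   and the second O(n / log n). *)

definition inc_trees_on :: "'a::linorder set \<Rightarrow> 'a tree set" where
  "inc_trees_on S = {t. set_tree t = S \<and> distinct (inorder t) \<and> heap t}"

lemma inc_trees_on_empty [simp]: "inc_trees_on {} = {Leaf}"
  by (auto simp: inc_trees_on_def)

lemma set_tree_inc_trees_on: "t \<in> inc_trees_on S \<Longrightarrow> set_tree t = S"
  by (simp add: inc_trees_on_def)

lemma size_inc_trees_on: "t \<in> inc_trees_on S \<Longrightarrow> size t = card S"
  by (auto simp: inc_trees_on_def dest!: distinct_card)

lemma inc_trees_on_split_root:
  assumes "finite S" "S \<noteq> {}"
  shows "inc_trees_on S = (\<Union>L\<in>Pow (S - {Min S}).
           (\<lambda>(l, r). Node l (Min S) r) ` (inc_trees_on L \<times> inc_trees_on (S - {Min S} - L)))"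
    (is "_ = ?R")
proof (intro equalityI subsetI)
  fix t assume t: "t \<in> inc_trees_on S"
  with assms obtain l m r where [simp]: "t = Node l m r"
    by (cases t) (auto simp: inc_trees_on_def)
  from t have "m = Min S"
    using assms by (intro Min_eqI[symmetric]) (auto simp: inc_trees_on_def)
  with t show "t \<in> ?R"
    by (auto simp: inc_trees_on_def intro!: UN_I[of "set_tree l"] image_eqI[of _ _ "(l, r)"])
next
  fix t assume "t \<in> ?R"
  moreover have "Min S \<in> S" "\<And>x. x \<in> S \<Longrightarrow> Min S \<le> x"
    using assms by auto
  ultimately show "t \<in> inc_trees_on S"
    by (fastforce simp: inc_trees_on_def)
qed

lemma finite_inc_trees_on: "finite S \<Longrightarrow> finite (inc_trees_on S)"
proof (induction S rule: finite_psubset_induct)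
  case (psubset S)
  show ?case
  proof (cases "S = {}")
    case False
    have "finite (inc_trees_on L)" if "L \<subseteq> S - {Min S}" for L
      using that psubset.hyps False Min_in by (intro psubset.IH) blast
    with psubset.hyps False show ?thesis
      by (subst inc_trees_on_split_root) auto
  qed simp
qed

lemma sum_inc_trees_on_split_root:
  assumes "finite S" "S \<noteq> {}"
  defines "A \<equiv> S - {Min S}"
  shows "(\<Sum>t\<in>inc_trees_on S. h t)
       = (\<Sum>L\<in>Pow A. \<Sum>l\<in>inc_trees_on L. \<Sum>r\<in>inc_trees_on (A - L). h (Node l (Min S) r))"
proof -
  have fin: "finite (inc_trees_on L)" if "L \<subseteq> A" for L
    using that assms(1) by (auto simp: A_def intro: finite_inc_trees_on finite_subset)
  have "(\<Sum>t\<in>inc_trees_on S. h t)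
      = (\<Sum>L\<in>Pow A. \<Sum>t\<in>(\<lambda>(l, r). Node l (Min S) r) ` (inc_trees_on L \<times> inc_trees_on (A - L)). h t)"
    unfolding inc_trees_on_split_root[OF assms(1,2)] A_def[symmetric]
    using assms(1) fin by (intro sum.UNION_disjoint) (auto simp: A_def dest: set_tree_inc_trees_on)
  also have "\<dots> = (\<Sum>L\<in>Pow A. \<Sum>l\<in>inc_trees_on L. \<Sum>r\<in>inc_trees_on (A - L). h (Node l (Min S) r))"
    by (simp add: sum.reindex inj_on_def sum.cartesian_product case_prod_unfold)
  finally show ?thesis .
qed

lemma sum_Pow_fact_weighted:
  fixes \<phi> :: "nat \<Rightarrow> 'a::{comm_semiring_1, semiring_char_0}"
  assumes "finite A"
  shows "(\<Sum>L\<in>Pow A. fact (card L) * fact (card A - card L) * \<phi> (card L))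
       = fact (card A) * (\<Sum>j\<le>card A. \<phi> j)"
proof -
  have "(\<Sum>L\<in>Pow A. fact (card L) * fact (card A - card L) * \<phi> (card L))
      = (\<Sum>j\<le>card A. \<Sum>L\<in>{L\<in>Pow A. card L = j}. fact (card L) * fact (card A - card L) * \<phi> (card L))"
    using assms by (intro sum.group[symmetric]) (auto intro: card_mono)
  also have "\<dots> = (\<Sum>j\<le>card A. of_nat (card A choose j) * (fact j * fact (card A - j) * \<phi> j))"
  proof (intro sum.cong refl)
    fix j
    have "(\<Sum>L\<in>{L\<in>Pow A. card L = j}. fact (card L) * fact (card A - card L) * \<phi> (card L))
        = (\<Sum>L\<in>{L. L \<subseteq> A \<and> card L = j}. fact j * fact (card A - j) * \<phi> j)"
      by (intro sum.cong) auto
    then show "(\<Sum>L\<in>{L\<in>Pow A. card L = j}. fact (card L) * fact (card A - card L) * \<phi> (card L))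
        = of_nat (card A choose j) * (fact j * fact (card A - j) * \<phi> j)"
      by (simp add: n_subsets[OF assms])
  qed
  also have "\<dots> = (\<Sum>j\<le>card A. fact (card A) * \<phi> j)"
  proof (intro sum.cong refl)
    fix j assume "j \<in> {..card A}"
    then have "fact j * fact (card A - j) * (card A choose j) = fact (card A)"
      by (simp add: binomial_fact_lemma)
    then have "fact j * fact (card A - j) * of_nat (card A choose j) = (fact (card A) :: 'a)"
      by (metis of_nat_fact of_nat_mult)
    then show "of_nat (card A choose j) * (fact j * fact (card A - j) * \<phi> j) = fact (card A) * \<phi> j"
      by (metis mult.assoc mult.commute)
  qed
  finally show ?thesis by (simp add: sum_distrib_left)
qed

lemma card_inc_trees_on: "finite S \<Longrightarrow> card (inc_trees_on S) = fact (card S)"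
proof (induction S rule: finite_psubset_induct)
  case (psubset S)
  show ?case
  proof (cases "S = {}")
    case False
    define A where "A = S - {Min S}"
    have "Min S \<in> S" using psubset.hyps False by simp
    then have A: "finite A" "card S = Suc (card A)"
      using psubset.hyps by (simp_all add: A_def card_Suc_Diff1 del: card_Diff_insert)
    have IH: "card (inc_trees_on L) = fact (card L)" if "L \<subseteq> A" for L
      using that \<open>Min S \<in> S\<close> by (intro psubset.IH) (auto simp: A_def)
    have "card (inc_trees_on S)
        = (\<Sum>L\<in>Pow A. \<Sum>l\<in>inc_trees_on L. \<Sum>r\<in>inc_trees_on (A - L). 1::nat)"
      unfolding card_eq_sum A_def using psubset.hyps False by (rule sum_inc_trees_on_split_root)
    also have "\<dots> = (\<Sum>L\<in>Pow A. fact (card L) * fact (card A - card L) * 1)"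
      using A(1) by (intro sum.cong refl) (simp add: IH card_Diff_subset finite_subset)
    also have "\<dots> = fact (card S)"
      using sum_Pow_fact_weighted[OF A(1), of "\<lambda>_. 1::nat"] A(2) by (simp add: algebra_simps)
    finally show ?thesis .
  qed simp
qed

lemma sum_sum_add_const:
  fixes g h :: "_ \<Rightarrow> 'a::comm_semiring_1"
  shows "(\<Sum>x\<in>X. \<Sum>y\<in>Y. g x + h y + c)
       = of_nat (card Y) * sum g X + of_nat (card X) * sum h Y + of_nat (card X * card Y) * c"
  by (simp add: sum.distrib sum_distrib_left[symmetric] sum_distrib_right[symmetric] mult_ac)

fun toll_sum :: "(nat \<Rightarrow> 'b::comm_monoid_add) \<Rightarrow> 'a tree \<Rightarrow> 'b" where
  "toll_sum f Leaf = 0"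
| "toll_sum f (Node l x r) = toll_sum f l + toll_sum f r + f (size (Node l x r))"

lemma sum_toll_sum_inc_trees_on_split_root:
  fixes f :: "nat \<Rightarrow> 'b::{comm_semiring_1, semiring_char_0}"
  assumes "finite S" "S \<noteq> {}"
  defines "A \<equiv> S - {Min S}"
  shows "(\<Sum>t\<in>inc_trees_on S. toll_sum f t)
       = (\<Sum>L\<in>Pow A. fact (card (A - L)) * (\<Sum>t\<in>inc_trees_on L. toll_sum f t)
            + fact (card L) * (\<Sum>t\<in>inc_trees_on (A - L). toll_sum f t)
            + fact (card L) * fact (card (A - L)) * f (card S))"
proof -
  have A: "finite A" "card S = Suc (card A)"
    using assms Min_in by (simp_all add: A_def card_Suc_Diff1 del: card_Diff_insert)
  have "(\<Sum>l\<in>inc_trees_on L. \<Sum>r\<in>inc_trees_on (A - L). toll_sum f (Node l (Min S) r))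
      = (\<Sum>l\<in>inc_trees_on L. \<Sum>r\<in>inc_trees_on (A - L). toll_sum f l + toll_sum f r + f (card S))"
    if "L \<subseteq> A" for L
  proof (intro sum.cong refl)
    fix l r assume "l \<in> inc_trees_on L" "r \<in> inc_trees_on (A - L)"
    then have "size (Node l (Min S) r) = card S"
      using that A by (simp add: size_inc_trees_on card_Diff_subset finite_subset card_mono)
    then show "toll_sum f (Node l (Min S) r) = toll_sum f l + toll_sum f r + f (card S)"
      by simp
  qed
  then show ?thesis
    using assms(1,2) A(1)
    by (simp add: sum_inc_trees_on_split_root A_def[symmetric] sum_sum_add_const card_inc_trees_on
        finite_subset)
qed

lemma sum_toll_sum_inc_trees_on:
  fixes f a :: "nat \<Rightarrow> 'b::{comm_semiring_1, semiring_char_0}"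
  assumes rec: "\<And>n. of_nat n * a n = of_nat n * f n + 2 * (\<Sum>j<n. a j)"
    and "a 0 = 0" and "finite S"
  shows "(\<Sum>t\<in>inc_trees_on S. toll_sum f t) = fact (card S) * a (card S)"
  using \<open>finite S\<close>
proof (induction S rule: finite_psubset_induct)
  case (psubset S)
  show ?case
  proof (cases "S = {}")
    case False
    define A where "A = S - {Min S}"
    define m where "m = card A"
    have "Min S \<in> S" using psubset.hyps False by simp
    then have A: "finite A" "card S = Suc m"
      using psubset.hyps by (simp_all add: A_def m_def card_Suc_Diff1 del: card_Diff_insert)
    have IH: "(\<Sum>t\<in>inc_trees_on L. toll_sum f t) = fact (card L) * a (card L)" if "L \<subseteq> A" for L
      using that \<open>Min S \<in> S\<close> by (intro psubset.IH) (auto simp: A_def)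
    have "(\<Sum>t\<in>inc_trees_on S. toll_sum f t)
        = (\<Sum>L\<in>Pow A. fact (card L) * fact (m - card L) * (a (card L) + a (m - card L) + f (card S)))"
      using psubset.hyps False A(1)
      by (simp add: sum_toll_sum_inc_trees_on_split_root A_def[symmetric] IH card_Diff_subset
          finite_subset m_def algebra_simps)
    also have "\<dots> = fact m * (\<Sum>j\<le>m. a j + a (m - j) + f (card S))"
      using sum_Pow_fact_weighted[OF A(1)] by (simp add: m_def)
    also have "(\<Sum>j\<le>m. a j + a (m - j) + f (card S)) = of_nat (card S) * a (card S)"
    proof -
      have "(\<Sum>j\<le>m. a (m - j)) = (\<Sum>j\<le>m. a j)"
        using sum.atLeastAtMost_rev[of a 0 m] by (simp add: atLeast0AtMost)
      then show ?thesis
        using rec[of "card S"] A(2) by (simp add: sum.distrib lessThan_Suc_atMost mult_2 algebra_simps)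
    qed
    finally show ?thesis
      using A(2) by (simp add: algebra_simps)
  qed (simp add: \<open>a 0 = 0\<close>)
qed

definition large_fringe_mean :: "nat \<Rightarrow> nat \<Rightarrow> real" where
  "large_fringe_mean k n = (if n \<le> k then 0 else 2 * (real n + 1) / (real k + 2) - 1)"

lemma large_fringe_mean_rec:
  "real n * large_fringe_mean k n
     = real n * of_bool (k < n) + 2 * (\<Sum>j<n. large_fringe_mean k j)"
proof (induction n)
  case (Suc n)
  have "real (Suc n) * large_fringe_mean k (Suc n)
      = real (Suc n) * of_bool (k < Suc n) + (real n * large_fringe_mean k n - real n * of_bool (k < n))
        + 2 * large_fringe_mean k n"
  proof (cases n k rule: linorder_cases)
    case greater
    then show ?thesis
      by (simp add: large_fringe_mean_def algebra_simps add_divide_distrib diff_divide_distrib)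
  qed (simp_all add: large_fringe_mean_def field_simps)
  with Suc.IH show ?case by simp
qed (simp add: large_fringe_mean_def)

lemma finite_subtrees: "finite (subtrees t)"
  by (induction t) auto

lemma card_large_subtrees_le_toll_sum:
  "real (card {u \<in> subtrees t. k < size u}) \<le> toll_sum (\<lambda>s. of_bool (k < s)) t"
proof (induction t)
  case (Node l x r)
  let ?U = "\<lambda>t. {u \<in> subtrees t. k < size u}"
  let ?root = "if k < size (Node l x r) then {Node l x r} else {}"
  have "?U (Node l x r) \<subseteq> ?root \<union> ?U l \<union> ?U r"
    by auto
  then have "card (?U (Node l x r)) \<le> card (?root \<union> ?U l \<union> ?U r)"
    by (intro card_mono) (auto simp: finite_subtrees)
  also have "\<dots> \<le> card ?root + card (?U l) + card (?U r)"
    by (rule order_trans[OF card_Un_le add_right_mono[OF card_Un_le]])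
  also have "\<dots> = of_bool (k < size (Node l x r)) + card (?U l) + card (?U r)"
    by simp
  finally have "real (card (?U (Node l x r)))
      \<le> real (of_bool (k < size (Node l x r)) + card (?U l) + card (?U r))"
    by (rule of_nat_mono)
  with Node.IH show ?case
    by (simp only: toll_sum.simps of_nat_add of_nat_of_bool)
qed simp

fun preorder_code :: "'a tree \<Rightarrow> bool list" where
  "preorder_code Leaf = [False]"
| "preorder_code (Node l _ r) = True # preorder_code l @ preorder_code r"

lemma preorder_code_append_eq:
  fixes s t :: "unit tree"
  shows "preorder_code s @ xs = preorder_code t @ ys \<Longrightarrow> s = t \<and> xs = ys"
proof (induction s arbitrary: t xs ys)
  case Leaf
  then show ?case by (cases t) auto
next
  case (Node l1 u r1)
  from Node.prems obtain l2 r2 where [simp]: "t = Node l2 () r2"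
    by (cases t) auto
  from Node.prems have "preorder_code l1 @ preorder_code r1 @ xs = preorder_code l2 @ preorder_code r2 @ ys"
    by simp
  then have "l1 = l2" "preorder_code r1 @ xs = preorder_code r2 @ ys"
    using Node.IH(1) by blast+
  then show ?case using Node.IH(2) by simp
qed

lemma length_preorder_code: "length (preorder_code t) = 2 * size t + 1"
  by (induction t) auto

lemma inj_on_padded_preorder_code:
  "inj_on (\<lambda>s. preorder_code s @ replicate (2 * k + 1 - length (preorder_code s)) False)
     {s :: unit tree. size s \<le> k}"
  by (auto simp: inj_on_def dest: preorder_code_append_eq)

lemma
  shows finite_shapes_size_le: "finite {s :: unit tree. size s \<le> k}"
    and card_shapes_size_le: "card {s :: unit tree. size s \<le> k} \<le> 2 ^ (2 * k + 1)"
proof -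
  let ?words = "{xs :: bool list. set xs \<subseteq> UNIV \<and> length xs = 2 * k + 1}"
  have words: "finite ?words" "card ?words = 2 ^ (2 * k + 1)"
    using finite_lists_length_eq[of "UNIV :: bool set"] card_lists_length_eq[of "UNIV :: bool set"]
    by simp_all
  have into: "(\<lambda>s. preorder_code s @ replicate (2 * k + 1 - length (preorder_code s)) False)
      ` {s. size s \<le> k} \<subseteq> ?words"
    by (auto simp: length_preorder_code)
  show "finite {s :: unit tree. size s \<le> k}"
    using inj_on_padded_preorder_code into words(1) by (rule inj_on_finite)
  show "card {s :: unit tree. size s \<le> k} \<le> 2 ^ (2 * k + 1)"
    using card_inj_on_le[OF inj_on_padded_preorder_code into words(1)] words(2) by simp
qed

lemma compacted_size_le:
  "compacted_size t \<le> 2 ^ (2 * k + 1) + card {u \<in> subtrees t. k < size u}"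
proof -
  have "shape ` (subtrees t - {Leaf}) \<subseteq> {s. size s \<le> k} \<union> shape ` {u \<in> subtrees t. k < size u}"
    by (auto simp: shape_def)
  then have "compacted_size t \<le> card ({s. size s \<le> k} \<union> shape ` {u \<in> subtrees t. k < size u})"
    unfolding compacted_size_def by (intro card_mono) (simp_all add: finite_shapes_size_le finite_subtrees)
  also have "\<dots> \<le> card {s :: unit tree. size s \<le> k} + card {u \<in> subtrees t. k < size u}"
    by (rule order_trans[OF card_Un_le add_left_mono[OF card_image_le]]) (simp add: finite_subtrees)
  finally show ?thesis
    using card_shapes_size_le[of k] by linarith
qed

lemma inc_trees_eq_inc_trees_on: "inc_trees n = inc_trees_on {1..n}"
proof (intro set_eqI iffI)
  fix t assume "t \<in> inc_trees n"
  then show "t \<in> inc_trees_on {1..n}"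
    by (auto simp: inc_trees_def inc_trees_on_def intro: card_distinct)
next
  fix t assume "t \<in> inc_trees_on {1..n}"
  then show "t \<in> inc_trees n"
    using size_inc_trees_on[of t] by (auto simp: inc_trees_def inc_trees_on_def)
qed

lemma expected_compacted_size_nonneg: "0 \<le> expected_compacted_size n"
  unfolding expected_compacted_size_def by (rule integral_nonneg_AE) simp

lemma expected_compacted_size_le:
  "expected_compacted_size n \<le> 2 ^ (2 * k + 1) + large_fringe_mean k n"
proof -
  let ?T = "inc_trees_on {1..n}"
  let ?F = "toll_sum (\<lambda>s. of_bool (k < s) :: real)"
  have fin: "finite ?T" and card: "card ?T = fact n"
    by (simp_all add: finite_inc_trees_on card_inc_trees_on)
  then have "?T \<noteq> {}" by auto
  with fin card have "expected_compacted_size n = (\<Sum>t\<in>?T. real (compacted_size t)) / fact n"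
    by (simp add: expected_compacted_size_def inc_trees_eq_inc_trees_on integral_pmf_of_set)
  also have "\<dots> \<le> (\<Sum>t\<in>?T. 2 ^ (2 * k + 1) + ?F t) / fact n"
  proof (intro divide_right_mono sum_mono)
    fix t
    have "real (compacted_size t) \<le> 2 ^ (2 * k + 1) + real (card {u \<in> subtrees t. k < size u})"
      using of_nat_mono[OF compacted_size_le[where t = t and k = k], where 'a = real] by simp
    then show "real (compacted_size t) \<le> 2 ^ (2 * k + 1) + ?F t"
      using card_large_subtrees_le_toll_sum[where t = t and k = k] by linarith
  qed simp
  also have "\<dots> = 2 ^ (2 * k + 1) + (\<Sum>t\<in>?T. ?F t) / fact n"
    using card by (simp add: sum.distrib add_divide_distrib)
  also have "(\<Sum>t\<in>?T. ?F t) = fact n * large_fringe_mean k n"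
    using sum_toll_sum_inc_trees_on[where a = "large_fringe_mean k", OF large_fringe_mean_rec, of "{1..n}"]
    by (simp add: large_fringe_mean_def)
  finally show ?thesis by simp
qed

lemma floor_log_div_4_bounds:
  assumes "0 < n"
  shows "16 ^ (floor_log n div 4) \<le> n" and "n < 16 ^ (floor_log n div 4 + 1)"
proof -
  let ?k = "floor_log n div 4"
  have "(16::nat) ^ ?k = 2 ^ (4 * ?k)" by (simp add: power_mult)
  also have "\<dots> \<le> 2 ^ floor_log n" by (intro power_increasing) auto
  also have "\<dots> \<le> n" using assms by (rule floor_log_exp2_le)
  finally show "16 ^ ?k \<le> n" .
  have "n < 2 ^ (floor_log n + 1)" using floor_log_exp2_gt[of n] by simp
  also have "\<dots> \<le> 2 ^ (4 * (?k + 1))" by (intro power_increasing) auto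
  also have "\<dots> = (2 ^ 4) ^ (?k + 1)" by (rule power_mult)
  also have "\<dots> = 16 ^ (?k + 1)" by simp
  finally show "n < 16 ^ (?k + 1)" .
qed

lemma expected_compacted_size_le_sqrt_add_div_ln:
  assumes "2 \<le> n"
  shows "expected_compacted_size n \<le> 2 * sqrt (real n) + 2 * (real n + 1) * ln 16 / ln (real n)"
proof -
  define k where "k = floor_log n div 4"
  have "16 ^ k \<le> n" "n < 16 ^ (k + 1)"
    using floor_log_div_4_bounds[of n] assms by (simp_all add: k_def)
  then have lower: "(16::real) ^ k \<le> real n" and upper: "real n < 16 ^ (k + 1)"
    using of_nat_le_iff[of "16 ^ k" n, where 'a = real] of_nat_less_iff[of n "16 ^ (k + 1)", where 'a = real]
    by simp_all
  have "((2::real) ^ (2 * k)) ^ 2 = (2 ^ 4) ^ k"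
    by (simp only: power_mult[symmetric]) (simp add: mult.commute)
  with lower have "(2::real) ^ (2 * k) \<le> sqrt (real n)"
    by (intro real_le_rsqrt) simp
  then have pow: "(2::real) ^ (2 * k + 1) \<le> 2 * sqrt (real n)"
    by simp
  have ln_pos: "0 < ln (real n)" using assms by simp
  have "ln (real n) < ln (16 ^ (k + 1))"
    using upper assms by (subst ln_less_cancel_iff) simp_all
  then have ln_le: "ln (real n) \<le> (real k + 1) * ln 16"
    unfolding ln_realpow by (simp add: algebra_simps)
  have "2 * (real n + 1) / (real k + 2) \<le> 2 * (real n + 1) / (real k + 1)"
    by (rule frac_le) simp_all
  then have "large_fringe_mean k n \<le> 2 * (real n + 1) / (real k + 1)"
    by (simp add: large_fringe_mean_def)
  also have "\<dots> = 2 * (real n + 1) * ln 16 / ((real k + 1) * ln 16)"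
    by (rule mult_divide_mult_cancel_right[symmetric]) simp
  also have "\<dots> \<le> 2 * (real n + 1) * ln 16 / ln (real n)"
    using ln_le ln_pos by (intro divide_left_mono) auto
  finally show ?thesis
    using pow expected_compacted_size_le[of n k] by linarith
qed

theorem theorem3p9:
  shows "(\<lambda>n. expected_compacted_size n) \<in> O(\<lambda>n. real n / ln (real n))"
proof -
  define B where "B n = 2 * sqrt (real n) + 2 * (real n + 1) * ln 16 / ln (real n)" for n :: nat
  have "eventually (\<lambda>n. norm (expected_compacted_size n) \<le> norm (B n)) at_top"
    using eventually_ge_at_top[of "2::nat"]
  proof eventually_elim
    case (elim n)
    then show ?case
      using expected_compacted_size_le_sqrt_add_div_ln[OF elim] expected_compacted_size_nonneg[of n]
      unfolding B_def by simp
  qed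
  then have "(\<lambda>n. expected_compacted_size n) \<in> O(B)"
    by (rule landau_o.big_mono)
  moreover have "B \<in> O(\<lambda>n. real n / ln (real n))"
    unfolding B_def by real_asymp
  ultimately show ?thesis
    by (rule landau_o.big_trans)
qed

end
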